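(* Let $\Theta=S\cup E\cup X$ be an action theory whose big model $M_{big}=\langle W_{big},R_{big}\rangle$ is a model of $\Theta$. Then for every PDL-model $M=\langle W,R\rangle$ with $M\models\Theta$ there is a minimal (with respect to set inclusion) $R'\subseteq R_{big}\setminus R$ such that $\langle \mathrm{val}(S),R\cup R'\rangle$ is a model of $\Theta$.
   Context: Fix a set $\mathrm{Act}$ of atomic actions and a set $\mathrm{Prop}$ of atoms. Boolean formulas are classical propositional formulas over $\mathrm{Prop}$; a valuation is a maximal consistent set of literals; $\mathrm{val}(S)$ is the set of valuations satisfying every formula of $S$. Modal formulas are built from Boolean formulas with the Boolean connectives and $[a]$ for $a\in\mathrm{Act}$; $\langle a\rangle\Phi:=\neg[a]\neg\Phi$. A PDL-model is $M=\langle W,R\rangle$, $W$ a set of valuations, $R$ assigning to each $a$ a relation $R_a\subseteq W\times W$ (relations are compared as sets of labelled pairs); truth at worlds is standard ($w\models p$ iff $p\in w$; $w\models[a]\Phi$ iff all $R_a$-successors satisfy $\Phi$), and $M\models\Theta$ iff every formula of $\Theta$ holds at every world. A static law is a Boolean formula; an effect law for $a$ is $\varphi\to[a]\psi$; an executability law for $a$ is $\varphi\to\langle a\rangle\top$ ($\varphi,\psi$ Boolean). An action theory is $\Theta=S\cup E\cup X$ (static, effect, executability laws); $E_a$ is the set of effect laws for $a$. The big model of $\Theta$ is $M_{big}=\langle W_{big},R_{big}\rangle$ with $W_{big}=\mathrm{val}(S)$ and $(R_{big})_a=\{(w,w')\in W_{big}^2:$ for all $\varphi\to[a]\psi\in E_a$,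 if $w\models\varphi$ then $w'\models\psi\}$. *)

theory Defs
  imports Main
begin

datatype 'p bform = BTop | BAtom 'p | BNot "'p bform" | BAnd "'p bform" "'p bform"
  | BOr "'p bform" "'p bform" | BImp "'p bform" "'p bform"

text \<open>A valuation (maximal consistent set of literals) is represented by the set of
  atoms it makes true.\<close>
type_synonym 'p valuation = "'p set"

fun bsat :: "'p valuation \<Rightarrow> 'p bform \<Rightarrow> bool" where
  "bsat w BTop = True"
| "bsat w (BAtom p) = (p \<in> w)"
| "bsat w (BNot f) = (\<not> bsat w f)"
| "bsat w (BAnd f g) = (bsat w f \<and> bsat w g)"
| "bsat w (BOr f g) = (bsat w f \<or> bsat w g)"
| "bsat w (BImp f g) = (bsat w f \<longrightarrow> bsat w g)"

definition val :: "'p bform set \<Rightarrow> 'p valuation set" where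
  "val S = {w. \<forall>f\<in>S. bsat w f}"

datatype ('a, 'p) mform = MBool "'p bform" | MNot "('a, 'p) mform"
  | MAnd "('a, 'p) mform" "('a, 'p) mform" | MOr "('a, 'p) mform" "('a, 'p) mform"
  | MImp "('a, 'p) mform" "('a, 'p) mform" | MBox 'a "('a, 'p) mform"

definition MDia :: "'a \<Rightarrow> ('a, 'p) mform \<Rightarrow> ('a, 'p) mform" where
  "MDia a F = MNot (MBox a (MNot F))"

type_synonym ('a, 'p) rel = "('a \<times> 'p valuation \<times> 'p valuation) set"

definition pdl_model :: "'p valuation set \<Rightarrow> ('a, 'p) rel \<Rightarrow> bool" where
  "pdl_model W R \<longleftrightarrow> (\<forall>(a, w, w') \<in> R. w \<in> W \<and> w' \<in> W)"

fun msat :: "'p valuation set \<Rightarrow> ('a, 'p) rel \<Rightarrow> 'p valuation \<Rightarrow> ('a, 'p) mform \<Rightarrow> bool" where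
  "msat W R w (MBool f) = bsat w f"
| "msat W R w (MNot F) = (\<not> msat W R w F)"
| "msat W R w (MAnd F G) = (msat W R w F \<and> msat W R w G)"
| "msat W R w (MOr F G) = (msat W R w F \<or> msat W R w G)"
| "msat W R w (MImp F G) = (msat W R w F \<longrightarrow> msat W R w G)"
| "msat W R w (MBox a F) = (\<forall>w'. (a, w, w') \<in> R \<longrightarrow> msat W R w' F)"

definition models :: "'p valuation set \<Rightarrow> ('a, 'p) rel \<Rightarrow> ('a, 'p) mform set \<Rightarrow> bool" where
  "models W R \<Theta> \<longleftrightarrow> (\<forall>F\<in>\<Theta>. \<forall>w\<in>W. msat W R w F)"

text \<open>An action theory: static laws S, effect laws E (triples (a, phi, psi) standing for
  phi \<longrightarrow> [a] psi), executability laws X (pairs (a, phi) standing for phi \<longrightarrow> <a> T).\<close>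
record ('a, 'p) action_theory =
  stat :: "'p bform set"
  eff :: "('a \<times> 'p bform \<times> 'p bform) set"
  exe :: "('a \<times> 'p bform) set"

definition theory_formulas :: "('a, 'p) action_theory \<Rightarrow> ('a, 'p) mform set" where
  "theory_formulas T =
     MBool ` stat T
   \<union> (\<lambda>(a, \<phi>, \<psi>). MImp (MBool \<phi>) (MBox a (MBool \<psi>))) ` eff T
   \<union> (\<lambda>(a, \<phi>). MImp (MBool \<phi>) (MDia a (MBool BTop))) ` exe T"

definition W_big :: "('a, 'p) action_theory \<Rightarrow> 'p valuation set" where
  "W_big T = val (stat T)"

definition R_big :: "('a, 'p) action_theory \<Rightarrow> ('a, 'p) rel" where
  "R_big T = {(a, w, w'). w \<in> W_big T \<and> w' \<in> W_big T \<and>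
     (\<forall>\<phi> \<psi>. (a, \<phi>, \<psi>) \<in> eff T \<longrightarrow> bsat w \<phi> \<longrightarrow> bsat w' \<psi>)}"

end

theory Submission
  imports Defs
begin

text \<open>Outside the worlds of the given model, executability laws may demand
  \<open>a\<close>-successors that the model does not provide. Add, for every world of \<open>val S\<close> outside
  the model and every action demanded there, one \<open>a\<close>-edge chosen from the big model.
  Since \<open>M\<^sub>b\<^sub>i\<^sub>g\<close> satisfies the executability laws such an edge exists, and edges of
  \<open>R\<^sub>b\<^sub>i\<^sub>g\<close> respect all effect laws, so the extension is a model of the theory.
  Each added edge is the only \<open>a\<close>-edge leaving its source, so removing any of them
  violates an executability law: the extension is minimal.\<close>

lemma msat_MDia_top [simp]: "msat W R w (MDia a (MBool BTop)) \<longleftrightarrow> (\<exists>w'. (a, w, w') \<in> R)"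
  by (simp add: MDia_def)

definition exe_demanded :: "('a, 'p) action_theory \<Rightarrow> 'a \<Rightarrow> 'p valuation \<Rightarrow> bool" where
  "exe_demanded T a w \<longleftrightarrow> (\<exists>\<phi>. (a, \<phi>) \<in> exe T \<and> bsat w \<phi>)"

lemma models_theory_formulas_iff:
  "models W R (theory_formulas T) \<longleftrightarrow>
    (\<forall>w\<in>W. (\<forall>f\<in>stat T. bsat w f)
       \<and> (\<forall>a \<phi> \<psi> w'. (a, \<phi>, \<psi>) \<in> eff T \<longrightarrow> bsat w \<phi> \<longrightarrow> (a, w, w') \<in> R \<longrightarrow> bsat w' \<psi>)
       \<and> (\<forall>a. exe_demanded T a w \<longrightarrow> (\<exists>w'. (a, w, w') \<in> R)))"
  unfolding models_def theory_formulas_def ball_Un ball_simps(9) exe_demanded_def by (auto; blast)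

lemma models_effD:
  "models W R (theory_formulas T) \<Longrightarrow> w \<in> W \<Longrightarrow> (a, \<phi>, \<psi>) \<in> eff T \<Longrightarrow> bsat w \<phi> \<Longrightarrow>
    (a, w, w') \<in> R \<Longrightarrow> bsat w' \<psi>"
  unfolding models_theory_formulas_iff by blast

lemma models_exeD:
  "models W R (theory_formulas T) \<Longrightarrow> w \<in> W \<Longrightarrow> exe_demanded T a w \<Longrightarrow> \<exists>w'. (a, w, w') \<in> R"
  unfolding models_theory_formulas_iff by blast

text \<open>If no \<open>R\<^sub>b\<^sub>i\<^sub>g\<close>-successor exists, the \<open>SOME\<close> target is arbitrary; the big-model
  hypothesis of the theorem rules this out.\<close>

definition big_completion :: "('a, 'p) action_theory \<Rightarrow> 'p valuation set \<Rightarrow> ('a, 'p) rel" where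
  "big_completion T W =
     {(a, w, SOME w'. (a, w, w') \<in> R_big T) | a w. w \<in> val (stat T) - W \<and> exe_demanded T a w}"

lemma big_completion_subset_R_big:
  assumes "models (W_big T) (R_big T) (theory_formulas T)"
  shows "big_completion T W \<subseteq> R_big T"
proof
  fix e assume "e \<in> big_completion T W"
  then obtain a w where e: "e = (a, w, SOME w'. (a, w, w') \<in> R_big T)"
    and "w \<in> val (stat T)" "exe_demanded T a w"
    by (auto simp: big_completion_def)
  then have "\<exists>w'. (a, w, w') \<in> R_big T"
    using models_exeD[OF assms] by (simp add: W_big_def)
  then show "e \<in> R_big T"
    unfolding e by (rule someI_ex)
qed

lemma big_completion_disjoint:
  assumes "pdl_model W R"
  shows "big_completion T W \<inter> R = {}"
  using assms by (auto simp: big_completion_def pdl_model_def)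

lemma models_union_big_completion:
  assumes big: "models (W_big T) (R_big T) (theory_formulas T)"
    and R: "pdl_model W R" "models W R (theory_formulas T)"
  shows "models (val (stat T)) (R \<union> big_completion T W) (theory_formulas T)"
  unfolding models_theory_formulas_iff
proof (intro ballI conjI allI impI)
  fix w f assume "w \<in> val (stat T)" "f \<in> stat T"
  then show "bsat w f" by (simp add: val_def)
next
  fix w a \<phi> \<psi> w'
  assume law: "(a, \<phi>, \<psi>) \<in> eff T" "bsat w \<phi>" and edge: "(a, w, w') \<in> R \<union> big_completion T W"
  show "bsat w' \<psi>"
  proof (cases "(a, w, w') \<in> R")
    case True
    with R(1) have "w \<in> W" by (auto simp: pdl_model_def)
    with True law show ?thesis using models_effD[OF R(2)] by blast
  next
    case False
    with edge big_completion_subset_R_big[OF big] have "(a, w, w') \<in> R_big T" by blast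
    with law show ?thesis by (auto simp: R_big_def)
  qed
next
  fix w a assume "w \<in> val (stat T)" "exe_demanded T a w"
  then show "\<exists>w'. (a, w, w') \<in> R \<union> big_completion T W"
    using models_exeD[OF R(2)] by (cases "w \<in> W") (auto simp: big_completion_def)
qed

lemma big_completion_minimal:
  assumes "pdl_model W R" and "R'' \<subset> big_completion T W"
  shows "\<not> models (val (stat T)) (R \<union> R'') (theory_formulas T)"
proof
  assume model: "models (val (stat T)) (R \<union> R'') (theory_formulas T)"
  obtain a w w' where missing: "(a, w, w') \<in> big_completion T W" "(a, w, w') \<notin> R''"
    using assms(2) by auto
  then have w: "w \<in> val (stat T) - W" "exe_demanded T a w"
    and w': "w' = (SOME v. (a, w, v) \<in> R_big T)"
    by (auto simp: big_completion_def)
  then obtain v where v: "(a, w, v) \<in> R \<union> R''"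
    using models_exeD[OF model] by blast
  have "(a, w, v) \<notin> R"
    using assms(1) w by (auto simp: pdl_model_def)
  with v have "(a, w, v) \<in> R''" by blast
  moreover from this have "v = w'"
    using assms(2) w' by (auto simp: big_completion_def)
  ultimately show False
    using missing by blast
qed

theorem lemma3:
  fixes T :: "('a, 'p) action_theory"
  assumes "models (W_big T) (R_big T) (theory_formulas T)"
  shows "\<forall>W R. pdl_model W R \<and> models W R (theory_formulas T) \<longrightarrow>
    (\<exists>R'. R' \<subseteq> R_big T - R
       \<and> models (val (stat T)) (R \<union> R') (theory_formulas T)
       \<and> (\<forall>R''. R'' \<subset> R' \<longrightarrow> \<not> models (val (stat T)) (R \<union> R'') (theory_formulas T)))"
proof (intro allI impI)
  fix W R
  assume "pdl_model W R \<and> models W R (theory_formulas T)"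
  then have R: "pdl_model W R" "models W R (theory_formulas T)" by auto
  let ?R' = "big_completion T W"
  have "?R' \<subseteq> R_big T - R"
    using big_completion_subset_R_big[OF assms] big_completion_disjoint[OF R(1)] by blast
  moreover have "models (val (stat T)) (R \<union> ?R') (theory_formulas T)"
    using models_union_big_completion[OF assms R] .
  moreover have "\<forall>R''. R'' \<subset> ?R' \<longrightarrow> \<not> models (val (stat T)) (R \<union> R'') (theory_formulas T)"
    using big_completion_minimal[OF R(1)] by blast
  ultimately show "\<exists>R'. R' \<subseteq> R_big T - R
       \<and> models (val (stat T)) (R \<union> R') (theory_formulas T)
       \<and> (\<forall>R''. R'' \<subset> R' \<longrightarrow> \<not> models (val (stat T)) (R \<union> R'') (theory_formulas T))"
    by blast
qed

end
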